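(* Let $K$ be a field, $\mathcal A$ a $K$-algebra, $\vartheta$ any one of the four types (left, right, pre-two-sided, two-sided), and $M$ a $\vartheta$-Mathieu subspace of $\mathcal A$ such that every element of $\sqrt M$ is algebraic over $K$. Let $V$ be a $K$-subspace of $M$ with $I_M\subseteq V$. Then $V$ is a $\vartheta$-Mathieu subspace of $\mathcal A$ and $\sqrt V=\sqrt{I_M}$.
   Context: All algebras are associative and unital. $\sqrt S$ is the set of $a\in\mathcal A$ with $a^m\in S$ for all sufficiently large $m$. For $\vartheta\neq$ pre-two-sided, $I_M$ is the largest $\vartheta$-ideal of $\mathcal A$ contained in $M$ (the sum of all of them), where a $\vartheta$-ideal is a left ideal if $\vartheta$ = left, right ideal if right, two-sided ideal if two-sided; for $\vartheta$ = pre-two-sided, $I_M$ is the sum of the largest left ideal contained in $M$ and the largest right ideal contained in $M$. A $K$-subspace $V$ is a left (resp. right) Mathieu subspace if whenever $a^m\in V$ for all $m\ge1$, then for every $b\in\mathcal A$, $ba^m\in V$ (resp. $a^mb\in V$) for all sufficiently large $m$; pre-two-sided if both left and right; two-sided if whenever $a^m\in V$ for all $m\ge1$, then for all $b,c$, $ba^mc\in V$ for all sufficiently large $m$. *)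

theory Defs
  imports Main "HOL-Computational_Algebra.Polynomial"
begin

definition k_algebra :: "('k::field \<Rightarrow> 'a::ring_1 \<Rightarrow> 'a) \<Rightarrow> bool" where
  "k_algebra s \<longleftrightarrow> vector_space s \<and>
     (\<forall>c a b. s c (a * b) = s c a * b \<and> s c (a * b) = a * s c b)"

definition algebraic_over :: "('k::field \<Rightarrow> 'a::ring_1 \<Rightarrow> 'a) \<Rightarrow> 'a \<Rightarrow> bool" where
  "algebraic_over s a \<longleftrightarrow>
     (\<exists>p :: 'k poly. p \<noteq> 0 \<and> (\<Sum>i\<le>degree p. s (coeff p i) (a ^ i)) = 0)"

definition rad :: "'a::monoid_mult set \<Rightarrow> 'a set" where
  "rad S = {a. \<exists>N. \<forall>m\<ge>N. a ^ m \<in> S}"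

datatype mtype = LeftT | RightT | PreTwoT | TwoT

definition mathieu :: "('k::field \<Rightarrow> 'a::ring_1 \<Rightarrow> 'a) \<Rightarrow> mtype \<Rightarrow> 'a set \<Rightarrow> bool" where
  "mathieu s t V \<longleftrightarrow> module.subspace s V \<and>
     (\<forall>a. (\<forall>m\<ge>1. a ^ m \<in> V) \<longrightarrow>
        (case t of
           LeftT \<Rightarrow> (\<forall>b. \<exists>N. \<forall>m\<ge>N. b * a ^ m \<in> V)
         | RightT \<Rightarrow> (\<forall>b. \<exists>N. \<forall>m\<ge>N. a ^ m * b \<in> V)
         | PreTwoT \<Rightarrow> (\<forall>b. \<exists>N. \<forall>m\<ge>N. b * a ^ m \<in> V) \<and>
                      (\<forall>b. \<exists>N. \<forall>m\<ge>N. a ^ m * b \<in> V)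
         | TwoT \<Rightarrow> (\<forall>b c. \<exists>N. \<forall>m\<ge>N. b * a ^ m * c \<in> V)))"

definition left_ideal :: "'a::ring_1 set \<Rightarrow> bool" where
  "left_ideal I \<longleftrightarrow> 0 \<in> I \<and> (\<forall>x\<in>I. \<forall>y\<in>I. x + y \<in> I) \<and> (\<forall>b. \<forall>x\<in>I. b * x \<in> I)"

definition right_ideal :: "'a::ring_1 set \<Rightarrow> bool" where
  "right_ideal I \<longleftrightarrow> 0 \<in> I \<and> (\<forall>x\<in>I. \<forall>y\<in>I. x + y \<in> I) \<and> (\<forall>b. \<forall>x\<in>I. x * b \<in> I)"

definition twosided_ideal :: "'a::ring_1 set \<Rightarrow> bool" where
  "twosided_ideal I \<longleftrightarrow> left_ideal I \<and> right_ideal I"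

definition sum_of_sets :: "'a::comm_monoid_add set set \<Rightarrow> 'a set" where
  "sum_of_sets \<F> = {\<Sum>F | F. finite F \<and> F \<subseteq> \<Union>\<F>}"

definition largest_in :: "('a set \<Rightarrow> bool) \<Rightarrow> 'a::ring_1 set \<Rightarrow> 'a set" where
  "largest_in P M = sum_of_sets {I. P I \<and> I \<subseteq> M}"

definition I_M :: "mtype \<Rightarrow> 'a::ring_1 set \<Rightarrow> 'a set" where
  "I_M t M = (case t of
      LeftT \<Rightarrow> largest_in left_ideal M
    | RightT \<Rightarrow> largest_in right_ideal M
    | TwoT \<Rightarrow> largest_in twosided_ideal M
    | PreTwoT \<Rightarrow> {x + y | x y. x \<in> largest_in left_ideal M \<and> y \<in> largest_in right_ideal M})"

end

theory Submission
  imports Defs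
begin

text \<open>
  Let \<open>a \<in> \<surd>M\<close>, say \<open>a\<^sup>m \<in> M\<close> for \<open>m \<ge> N\<close>. Then every positive power of \<open>x = a\<^sup>N\<^sup>+\<^sup>1\<close> lies in \<open>M\<close>,
  so the Mathieu property gives \<open>b x\<^sup>k c \<in> M\<close> for all large \<open>k\<close> (with \<open>b\<close> or \<open>c\<close> equal to 1
  according to the type). As \<open>x \<in> \<surd>M\<close> is algebraic, a polynomial relation with lowest
  nonzero coefficient in degree \<open>r\<close> expresses \<open>b x\<^sup>k c\<close> as a combination of higher terms
  \<open>b x\<^sup>k\<^sup>' c\<close>, so by downward induction \<open>b x\<^sup>k c \<in> M\<close> already for all \<open>k \<ge> r\<close>, uniformly in
  \<open>b, c\<close>. Hence \<open>x\<^sup>r\<close>, and with it every \<open>a\<^sup>m\<close> with \<open>m \<ge> (N + 1) r\<close>, lies in the largest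
  \<open>\<vartheta>\<close>-ideal contained in \<open>M\<close>, i.e. in \<open>I\<^sub>M\<close>. This gives \<open>\<surd>M \<subseteq> \<surd>I\<^sub>M\<close>, so the chain
  \<open>I\<^sub>M \<subseteq> V \<subseteq> M\<close> collapses on radicals, and the ideal property of \<open>I\<^sub>M \<subseteq> V\<close> yields the
  Mathieu property of \<open>V\<close>.
\<close>

lemma (in vector_space) linear_recurrence_tail_in_subspace:
  fixes c :: "nat \<Rightarrow> 'a" and u :: "nat \<Rightarrow> 'b"
  assumes M: "subspace M" and "r \<le> d" and cr: "c r \<noteq> 0"
    and rec: "\<And>j. (\<Sum>i=r..d. c i *s u (i + j)) = 0"
    and tail: "\<forall>k\<ge>L. u k \<in> M" and "r \<le> k"
  shows "u k \<in> M"
proof -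
  have "r \<le> m \<Longrightarrow> L \<le> m + n \<Longrightarrow> u m \<in> M" for m n
  proof (induction n arbitrary: m)
    case 0
    then show ?case using tail by simp
  next
    case (Suc n)
    define j where "j = m - r"
    have later: "c i *s u (i + j) \<in> M" if "i \<in> {Suc r..d}" for i
      using that Suc.prems by (intro subspace_scale[OF M] Suc.IH) (auto simp: j_def)
    have "c r *s u m = - (\<Sum>i=Suc r..d. c i *s u (i + j))"
      using rec[of j] Suc.prems \<open>r \<le> d\<close>
      by (simp add: sum.atLeast_Suc_atMost j_def eq_neg_iff_add_eq_0)
    then have "u m = inverse (c r) *s - (\<Sum>i=Suc r..d. c i *s u (i + j))"
      using cr by (metis scale_one scale_scale field_class.field_inverse)
    moreover have "(\<Sum>i=Suc r..d. c i *s u (i + j)) \<in> M"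
      using later by (rule subspace_sum[OF M])
    ultimately show ?case
      by (simp add: subspace_scale[OF M] subspace_neg[OF M])
  qed
  from this[of k L] show ?thesis using \<open>r \<le> k\<close> by simp
qed

lemma k_algebra_vector_space: "k_algebra s \<Longrightarrow> vector_space s"
  unfolding k_algebra_def by blast

lemma k_algebra_scale_sandwich:
  assumes "k_algebra s"
  shows "b * s c x * d = s c (b * x * d)"
proof -
  have left: "s c (y * z) = s c y * z" and right: "s c (y * z) = y * s c z" for y z
    using assms unfolding k_algebra_def by blast+
  have "b * s c x * d = s c (b * x) * d" by (simp only: right)
  also have "\<dots> = s c (b * x * d)" by (simp only: left)
  finally show ?thesis .
qed

lemma algebraic_sandwich_powers_tail_in_subspace:
  assumes alg: "k_algebra s" and M: "module.subspace s M" and "algebraic_over s a"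
  obtains r where "\<And>b c L k. \<forall>m\<ge>L. b * a ^ m * c \<in> M \<Longrightarrow> r \<le> k \<Longrightarrow> b * a ^ k * c \<in> M"
proof -
  interpret vector_space s using alg by (rule k_algebra_vector_space)
  obtain p where "p \<noteq> 0" and root: "(\<Sum>i\<le>degree p. s (coeff p i) (a ^ i)) = 0"
    using \<open>algebraic_over s a\<close> unfolding algebraic_over_def by blast
  define r where "r = (LEAST i. coeff p i \<noteq> 0)"
  have cr: "coeff p r \<noteq> 0"
    unfolding r_def by (rule LeastI[of _ "degree p"]) (use \<open>p \<noteq> 0\<close> in simp)
  have below_r: "coeff p i = 0" if "i < r" for i
    using that not_less_Least unfolding r_def by blast
  have "b * a ^ k * c \<in> M" if "\<forall>m\<ge>L. b * a ^ m * c \<in> M" "r \<le> k" for b c L k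
  proof (rule linear_recurrence_tail_in_subspace
      [where c = "coeff p" and u = "\<lambda>m. b * a ^ m * c", OF M le_degree[OF cr] cr _ that])
    fix j
    have "(\<Sum>i=r..degree p. s (coeff p i) (b * a ^ (i + j) * c))
        = (\<Sum>i\<le>degree p. s (coeff p i) (b * a ^ (i + j) * c))"
      using below_r by (intro sum.mono_neutral_left) auto
    also have "\<dots> = (\<Sum>i\<le>degree p. b * s (coeff p i) (a ^ i) * (a ^ j * c))"
    proof (rule sum.cong[OF refl])
      fix i
      have "b * a ^ (i + j) * c = b * a ^ i * (a ^ j * c)"
        by (simp add: power_add mult.assoc)
      then show "s (coeff p i) (b * a ^ (i + j) * c) = b * s (coeff p i) (a ^ i) * (a ^ j * c)"
        by (simp only: k_algebra_scale_sandwich[OF alg])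
    qed
    also have "\<dots> = b * (\<Sum>i\<le>degree p. s (coeff p i) (a ^ i)) * (a ^ j * c)"
      by (simp add: sum_distrib_left sum_distrib_right)
    finally show "(\<Sum>i=r..degree p. s (coeff p i) (b * a ^ (i + j) * c)) = 0"
      using root by simp
  qed
  then show ?thesis using that by blast
qed

text \<open>\<open>multiples t x\<close> is the set of products of \<open>x\<close> that a \<open>t\<close>-ideal containing \<open>x\<close> must contain;
  for an additive subgroup \<open>M\<close>, \<open>multiples t x \<subseteq> M\<close> says that \<open>x\<close> lies in a \<open>t\<close>-ideal inside \<open>M\<close>.\<close>

primrec multiples :: "mtype \<Rightarrow> 'a::ring_1 \<Rightarrow> 'a set" where
  "multiples LeftT x = {b * x | b. True}"
| "multiples RightT x = {x * c | c. True}"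
| "multiples PreTwoT x = {b * x | b. True} \<union> {x * c | c. True}"
| "multiples TwoT x = {b * x * c | b c. True}"

primrec mathieu_condition :: "mtype \<Rightarrow> 'a::ring_1 set \<Rightarrow> 'a \<Rightarrow> bool" where
  "mathieu_condition LeftT V a \<longleftrightarrow> (\<forall>b. \<exists>N. \<forall>m\<ge>N. b * a ^ m \<in> V)"
| "mathieu_condition RightT V a \<longleftrightarrow> (\<forall>b. \<exists>N. \<forall>m\<ge>N. a ^ m * b \<in> V)"
| "mathieu_condition PreTwoT V a \<longleftrightarrow>
     (\<forall>b. \<exists>N. \<forall>m\<ge>N. b * a ^ m \<in> V) \<and> (\<forall>b. \<exists>N. \<forall>m\<ge>N. a ^ m * b \<in> V)"
| "mathieu_condition TwoT V a \<longleftrightarrow> (\<forall>b c. \<exists>N. \<forall>m\<ge>N. b * a ^ m * c \<in> V)"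

lemma mathieu_iff_mathieu_condition:
  "mathieu s t V \<longleftrightarrow> module.subspace s V \<and> (\<forall>a. (\<forall>m\<ge>1. a ^ m \<in> V) \<longrightarrow> mathieu_condition t V a)"
  unfolding mathieu_def by (cases t) simp_all

lemma self_mem_multiples: "x \<in> multiples t x"
  by (cases t) (auto intro!: exI[of _ 1])

lemma multiples_commuting_factor_subset:
  assumes "b * y = y * c"
  shows "multiples t (b * y) \<subseteq> multiples t y"
proof -
  have "d * (b * y) = (d * b) * y" "b * y * e = y * (c * e)" "d * (b * y) * e = (d * b) * y * e"
    for d e using assms by (simp_all add: mult.assoc)
  then show ?thesis by (cases t) auto
qed

lemma mathieu_condition_if_multiples_eventually:
  assumes "\<forall>m\<ge>N. multiples t (a ^ m) \<subseteq> V"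
  shows "mathieu_condition t V a"
  using assms by (cases t) (simp_all, blast+)

lemma multiples_powers_tail_if_mathieu_condition:
  assumes "mathieu_condition t M x"
    and tail: "\<And>b c L k. \<forall>m\<ge>L. b * x ^ m * c \<in> M \<Longrightarrow> r \<le> k \<Longrightarrow> b * x ^ k * c \<in> M"
  shows "\<forall>k\<ge>r. multiples t (x ^ k) \<subseteq> M"
proof -
  have left: "b * x ^ k \<in> M" if "\<exists>L. \<forall>m\<ge>L. b * x ^ m \<in> M" "r \<le> k" for b k
    using that tail[where b = b and c = 1] by auto
  have right: "x ^ k * c \<in> M" if "\<exists>L. \<forall>m\<ge>L. x ^ m * c \<in> M" "r \<le> k" for c k
    using that tail[where b = 1 and c = c] by auto
  show ?thesis
    using assms(1) left right tail by (cases t) (simp_all, blast+)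
qed

lemma mem_largest_in: "P I \<Longrightarrow> I \<subseteq> M \<Longrightarrow> x \<in> I \<Longrightarrow> x \<in> largest_in P M"
  unfolding largest_in_def sum_of_sets_def by (rule CollectI, rule exI[of _ "{x}"]) auto

lemma zero_mem_largest_in: "0 \<in> largest_in P M"
  unfolding largest_in_def sum_of_sets_def by (rule CollectI, rule exI[of _ "{}"]) auto

context
  fixes M :: "'a::ring_1 set"
  assumes zero_mem: "0 \<in> M" and add_mem: "\<And>x y. x \<in> M \<Longrightarrow> y \<in> M \<Longrightarrow> x + y \<in> M"
begin

lemma left_ideal_left_absorbed: "left_ideal {y. \<forall>b. b * y \<in> M}"
  unfolding left_ideal_def using zero_mem add_mem
  by (auto simp: distrib_left mult.assoc[symmetric])

lemma right_ideal_right_absorbed: "right_ideal {y. \<forall>c. y * c \<in> M}"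
  unfolding right_ideal_def using zero_mem add_mem
  by (auto simp: distrib_right mult.assoc)

lemma twosided_ideal_absorbed: "twosided_ideal {y. \<forall>b c. b * y * c \<in> M}"
  unfolding twosided_ideal_def left_ideal_def right_ideal_def using zero_mem add_mem
  by (auto simp: distrib_left distrib_right) (metis mult.assoc)+

lemma multiples_subset_I_M:
  assumes "multiples t x \<subseteq> M"
  shows "multiples t x \<subseteq> I_M t M"
proof -
  define L where "L = {y. \<forall>b. b * y \<in> M}"
  define R where "R = {y. \<forall>c. y * c \<in> M}"
  define T where "T = {y. \<forall>b c. b * y * c \<in> M}"
  have LM: "L \<subseteq> M" and RM: "R \<subseteq> M" and TM: "T \<subseteq> M"
    unfolding L_def R_def T_def by (auto; metis mult_1_left mult_1_right)+
  have L: "z \<in> largest_in left_ideal M" if "z \<in> L" for z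
    using mem_largest_in[where P = left_ideal, OF left_ideal_left_absorbed LM[unfolded L_def]] that
    by (simp add: L_def)
  have R: "z \<in> largest_in right_ideal M" if "z \<in> R" for z
    using mem_largest_in[where P = right_ideal, OF right_ideal_right_absorbed RM[unfolded R_def]] that
    by (simp add: R_def)
  have T: "z \<in> largest_in twosided_ideal M" if "z \<in> T" for z
    using mem_largest_in[where P = twosided_ideal, OF twosided_ideal_absorbed TM[unfolded T_def]] that
    by (simp add: T_def)
  have L_absorbs: "b * y \<in> L" if "y \<in> L" for b y
    using that by (simp add: L_def mult.assoc[symmetric])
  have R_absorbs: "y * c \<in> R" if "y \<in> R" for c y
    using that by (simp add: R_def mult.assoc)
  have T_absorbs: "b * y * c \<in> T" if "y \<in> T" for b c y
  proof -
    have "(b' * b) * y * (c * c') \<in> M" for b' c' using that by (simp add: T_def)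
    then show ?thesis by (simp add: T_def mult.assoc)
  qed
  show ?thesis
  proof (cases t)
    case LeftT
    with assms have "x \<in> L" by (auto simp: L_def)
    then show ?thesis unfolding LeftT using L L_absorbs by (auto simp: I_M_def)
  next
    case RightT
    with assms have "x \<in> R" by (auto simp: R_def)
    then show ?thesis unfolding RightT using R R_absorbs by (auto simp: I_M_def)
  next
    case PreTwoT
    with assms have "x \<in> L" "x \<in> R" by (auto simp: L_def R_def)
    then have "b * x \<in> largest_in left_ideal M" "x * c \<in> largest_in right_ideal M" for b c
      using L L_absorbs R R_absorbs by blast+
    then show ?thesis unfolding PreTwoT
      using zero_mem_largest_in[of left_ideal M] zero_mem_largest_in[of right_ideal M]
      by (auto simp: I_M_def) (metis add_0_right, metis add_0_left)
  next
    case TwoT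
    with assms have "x \<in> T" by (auto simp: T_def)
    then show ?thesis unfolding TwoT using T T_absorbs by (auto simp: I_M_def)
  qed
qed

end

lemma rad_mono: "A \<subseteq> B \<Longrightarrow> rad A \<subseteq> rad B"
  unfolding rad_def by blast

lemma mathieu_radical_multiples_eventually:
  assumes alg: "k_algebra s" and mathieu: "mathieu s t M"
    and algebraic: "\<forall>x\<in>rad M. algebraic_over s x" and "a \<in> rad M"
  shows "\<exists>N. \<forall>m\<ge>N. multiples t (a ^ m) \<subseteq> M"
proof -
  have M: "module.subspace s M" using mathieu by (simp add: mathieu_def)
  obtain N where N: "\<forall>m\<ge>N. a ^ m \<in> M" using \<open>a \<in> rad M\<close> unfolding rad_def by blast
  define x where "x = a ^ Suc N"
  have x_powers: "\<forall>q\<ge>1. x ^ q \<in> M"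
  proof (intro allI impI)
    fix q :: nat assume "1 \<le> q"
    then have "Suc N * 1 \<le> Suc N * q" by (rule mult_le_mono2)
    then have "N \<le> Suc N * q" by simp
    then show "x ^ q \<in> M" using N unfolding x_def power_mult[symmetric] by blast
  qed
  then have "mathieu_condition t M x" using mathieu by (simp add: mathieu_iff_mathieu_condition)
  moreover have "x \<in> rad M" using x_powers unfolding rad_def by blast
  then obtain r where "\<And>b c L k. \<forall>m\<ge>L. b * x ^ m * c \<in> M \<Longrightarrow> r \<le> k \<Longrightarrow> b * x ^ k * c \<in> M"
    using algebraic_sandwich_powers_tail_in_subspace[OF alg M] algebraic by blast
  ultimately have x_tail: "\<forall>k\<ge>r. multiples t (x ^ k) \<subseteq> M"
    by (rule multiples_powers_tail_if_mathieu_condition)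
  have "multiples t (a ^ m) \<subseteq> M" if "Suc N * r \<le> m" for m
  proof -
    define i where "i = m - Suc N * r"
    have x_r: "x ^ r = a ^ (Suc N * r)" by (simp only: x_def power_mult)
    have "a ^ m = a ^ i * x ^ r" "a ^ i * x ^ r = x ^ r * a ^ i"
      unfolding x_r power_add[symmetric] using that by (simp_all add: i_def add.commute)
    then show ?thesis
      using multiples_commuting_factor_subset[of "a ^ i" "x ^ r" "a ^ i" t] x_tail by auto
  qed
  then show ?thesis by blast
qed

theorem theorem4p10:
  fixes s :: "'k::field \<Rightarrow> 'a::ring_1 \<Rightarrow> 'a"
    and t :: mtype and M V :: "'a set"
  assumes "k_algebra s"
    and "mathieu s t M"
    and "\<forall>a\<in>rad M. algebraic_over s a"
    and "module.subspace s V" and "V \<subseteq> M"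
    and "I_M t M \<subseteq> V"
  shows "mathieu s t V \<and> rad V = rad (I_M t M)"
proof -
  have M: "module.subspace s M" using assms(2) by (simp add: mathieu_def)
  interpret vector_space s using assms(1) by (rule k_algebra_vector_space)
  have absorbed: "\<exists>N. \<forall>m\<ge>N. multiples t (a ^ m) \<subseteq> I_M t M" if "a \<in> rad M" for a
    using mathieu_radical_multiples_eventually[OF assms(1-3) that]
      multiples_subset_I_M[OF subspace_0[OF M] subspace_add[OF M]] by blast
  have "rad M \<subseteq> rad (I_M t M)"
    using absorbed self_mem_multiples unfolding rad_def by blast
  then have "rad V = rad (I_M t M)"
    using rad_mono[OF assms(5)] rad_mono[OF assms(6)] by blast
  moreover have "mathieu s t V"
    unfolding mathieu_iff_mathieu_condition
  proof (intro conjI allI impI)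
    fix a assume "\<forall>m\<ge>1. a ^ m \<in> V"
    then have "a \<in> rad M" using assms(5) unfolding rad_def by blast
    then show "mathieu_condition t V a"
      using absorbed assms(6) by (meson mathieu_condition_if_multiples_eventually order_trans)
  qed (rule assms(4))
  ultimately show ?thesis by blast
qed

end
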